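(* Let $X$ be a $T_1$-space. Then $\overline{\mathrm{F}}(X)\simeq\overline{\mathrm{F}}(\mathcal{O}X)$ and $\mathrm{F}(X)\simeq\mathrm{F}(\mathcal{O}X)$ as posets.
   Context: $\overline{\mathrm{F}}(X)$ is the set of all functions $X\to[-\infty,+\infty]$ and $\mathrm{F}(X)$ the set of all functions $X\to\mathbb{R}$, both ordered pointwise. $\mathcal{O}X$ is the frame of open sets of $X$. For a frame $L$: $\mathbb{Q}$ is the rationals; a sublocale of $L$ is a subset closed under arbitrary meets and such that $x\to s\in S$ for $x\in L$, $s\in S$; $\mathrm{coS}(L)$ is the frame of sublocales ordered by reverse inclusion, with pseudocomplement $^\ast$. The frame $\mathfrak{L}(\overline{\mathbb{IR}})$ is presented by generators $(r,\textsf{---})$, $(\textsf{---},s)$ ($r,s\in\mathbb{Q}$) with relations (r1) $(r,\textsf{---})\wedge(\textsf{---},s)=0$ for $r\ge s$; (r3) $(r,\textsf{---})=\bigvee_{s>r}(s,\textsf{---})$; (r4) $(\textsf{---},s)=\bigvee_{r<s}(\textsf{---},r)$. $\overline{\mathrm{F}}(L)$ is the set of frame homomorphisms $f\colon\mathfrak{L}(\overline{\mathbb{IR}})\to\mathrm{coS}(L)$ with $f(r,\textsf{---})^\ast\le f(\textsf{---},s)$ and $f(\textsf{---},s)^\ast\le f(r,\textsf{---})$ for $r<s$, ordered by $f\le g$ iff $f(r,\textsf{---})\le g(r,\textsf{---})$ and $g(\textsf{---},s)\le f(\textsf{---},s)$; it is a complete lattice with top $\boldsymbol{+\infty}$ ($(r,\textsf{---})\mapsto1$,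 $(\textsf{---},s)\mapsto0$) and bottom $\boldsymbol{-\infty}$ ($(r,\textsf{---})\mapsto0$, $(\textsf{---},s)\mapsto1$). $\mathrm{F}(L)$ is the set of $f\in\overline{\mathrm{F}}(L)$ such that for all $g\in\overline{\mathrm{F}}(L)$, $f\vee g=\boldsymbol{+\infty}\Rightarrow g=\boldsymbol{+\infty}$ and $f\wedge g=\boldsymbol{-\infty}\Rightarrow g=\boldsymbol{-\infty}$. *)

theory Defs
  imports "HOL-Analysis.Analysis" "HOL-Library.Extended_Real" "HOL-Library.FuncSet"
begin

definition is_lub :: "('b \<Rightarrow> 'b \<Rightarrow> bool) \<Rightarrow> 'b set \<Rightarrow> 'b set \<Rightarrow> 'b \<Rightarrow> bool" where
  "is_lub le A S x \<longleftrightarrow> x \<in> A \<and> (\<forall>s\<in>S. le s x) \<and> (\<forall>y\<in>A. (\<forall>s\<in>S. le s y) \<longrightarrow> le x y)"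

definition is_glb :: "('b \<Rightarrow> 'b \<Rightarrow> bool) \<Rightarrow> 'b set \<Rightarrow> 'b set \<Rightarrow> 'b \<Rightarrow> bool" where
  "is_glb le A S x \<longleftrightarrow> x \<in> A \<and> (\<forall>s\<in>S. le x s) \<and> (\<forall>y\<in>A. (\<forall>s\<in>S. le y s) \<longrightarrow> le y x)"

definition ljoin :: "('b \<Rightarrow> 'b \<Rightarrow> bool) \<Rightarrow> 'b set \<Rightarrow> 'b set \<Rightarrow> 'b" where
  "ljoin le A S = (THE x. is_lub le A S x)"

definition lmeet :: "('b \<Rightarrow> 'b \<Rightarrow> bool) \<Rightarrow> 'b set \<Rightarrow> 'b set \<Rightarrow> 'b" where
  "lmeet le A S = (THE x. is_glb le A S x)"

definition heyting :: "('b \<Rightarrow> 'b \<Rightarrow> bool) \<Rightarrow> 'b set \<Rightarrow> 'b \<Rightarrow> 'b \<Rightarrow> 'b" where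
  "heyting le L x y = ljoin le L {z \<in> L. le (lmeet le L {z, x}) y}"

definition sublocale_of :: "('b \<Rightarrow> 'b \<Rightarrow> bool) \<Rightarrow> 'b set \<Rightarrow> 'b set \<Rightarrow> bool" where
  "sublocale_of le L S \<longleftrightarrow> S \<subseteq> L \<and> (\<forall>T. T \<subseteq> S \<longrightarrow> lmeet le L T \<in> S)
     \<and> (\<forall>x\<in>L. \<forall>s\<in>S. heyting le L x s \<in> S)"

definition coS :: "('b \<Rightarrow> 'b \<Rightarrow> bool) \<Rightarrow> 'b set \<Rightarrow> 'b set set" where
  "coS le L = {S. sublocale_of le L S}"

definition coS_le :: "'b set \<Rightarrow> 'b set \<Rightarrow> bool" where
  "coS_le S T \<longleftrightarrow> T \<subseteq> S"

definition coS_join :: "('b \<Rightarrow> 'b \<Rightarrow> bool) \<Rightarrow> 'b set \<Rightarrow> 'b set set \<Rightarrow> 'b set" where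
  "coS_join le L A = ljoin coS_le (coS le L) A"

definition coS_meet :: "('b \<Rightarrow> 'b \<Rightarrow> bool) \<Rightarrow> 'b set \<Rightarrow> 'b set set \<Rightarrow> 'b set" where
  "coS_meet le L A = lmeet coS_le (coS le L) A"

definition coS_zero :: "('b \<Rightarrow> 'b \<Rightarrow> bool) \<Rightarrow> 'b set \<Rightarrow> 'b set" where
  "coS_zero le L = coS_join le L {}"

definition coS_one :: "('b \<Rightarrow> 'b \<Rightarrow> bool) \<Rightarrow> 'b set \<Rightarrow> 'b set" where
  "coS_one le L = coS_meet le L {}"

definition coS_pc :: "('b \<Rightarrow> 'b \<Rightarrow> bool) \<Rightarrow> 'b set \<Rightarrow> 'b set \<Rightarrow> 'b set" where
  "coS_pc le L S = coS_join le L {T \<in> coS le L. coS_meet le L {T, S} = coS_zero le L}"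

text \<open>A frame homomorphism f from the frame presented by generators (r,--), (--,s) and
  relations (r1), (r3), (r4) into coS(L) is (by the universal property of the presentation)
  the same as an assignment of the generators, a r = f(r,--) and b s = f(--,s), to elements
  of coS(L) that satisfy the relations in coS(L).  We represent f by the pair (a, b).\<close>

definition frame_hom_LIR :: "('b \<Rightarrow> 'b \<Rightarrow> bool) \<Rightarrow> 'b set
     \<Rightarrow> (rat \<Rightarrow> 'b set) \<times> (rat \<Rightarrow> 'b set) \<Rightarrow> bool" where
  "frame_hom_LIR le L f \<longleftrightarrow>
     (\<forall>r. fst f r \<in> coS le L) \<and> (\<forall>s. snd f s \<in> coS le L) \<and>
     (\<forall>r s. s \<le> r \<longrightarrow> coS_meet le L {fst f r, snd f s} = coS_zero le L) \<and>
     (\<forall>r. fst f r = coS_join le L {fst f s |s. s > r}) \<and>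
     (\<forall>s. snd f s = coS_join le L {snd f r |r. r < s})"

definition Fbar_frame :: "('b \<Rightarrow> 'b \<Rightarrow> bool) \<Rightarrow> 'b set
     \<Rightarrow> ((rat \<Rightarrow> 'b set) \<times> (rat \<Rightarrow> 'b set)) set" where
  "Fbar_frame le L = {f. frame_hom_LIR le L f \<and>
     (\<forall>r s. r < s \<longrightarrow> coS_le (coS_pc le L (fst f r)) (snd f s)
                    \<and> coS_le (coS_pc le L (snd f s)) (fst f r))}"

definition Fbar_le :: "(rat \<Rightarrow> 'b set) \<times> (rat \<Rightarrow> 'b set) \<Rightarrow> (rat \<Rightarrow> 'b set) \<times> (rat \<Rightarrow> 'b set) \<Rightarrow> bool" where
  "Fbar_le f g \<longleftrightarrow> (\<forall>r. coS_le (fst f r) (fst g r)) \<and> (\<forall>s. coS_le (snd g s) (snd f s))"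

definition Fbar_top :: "('b \<Rightarrow> 'b \<Rightarrow> bool) \<Rightarrow> 'b set \<Rightarrow> (rat \<Rightarrow> 'b set) \<times> (rat \<Rightarrow> 'b set)" where
  "Fbar_top le L = ((\<lambda>r. coS_one le L), (\<lambda>s. coS_zero le L))"

definition Fbar_bot :: "('b \<Rightarrow> 'b \<Rightarrow> bool) \<Rightarrow> 'b set \<Rightarrow> (rat \<Rightarrow> 'b set) \<times> (rat \<Rightarrow> 'b set)" where
  "Fbar_bot le L = ((\<lambda>r. coS_zero le L), (\<lambda>s. coS_one le L))"

text \<open>F(L): f \<or> g = +\<infinity> means +\<infinity> is the least upper bound of {f,g} in Fbar(L); dually for \<and>.\<close>
definition F_frame :: "('b \<Rightarrow> 'b \<Rightarrow> bool) \<Rightarrow> 'b set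
     \<Rightarrow> ((rat \<Rightarrow> 'b set) \<times> (rat \<Rightarrow> 'b set)) set" where
  "F_frame le L = {f \<in> Fbar_frame le L. \<forall>g \<in> Fbar_frame le L.
     (is_lub Fbar_le (Fbar_frame le L) {f, g} (Fbar_top le L) \<longrightarrow> g = Fbar_top le L) \<and>
     (is_glb Fbar_le (Fbar_frame le L) {f, g} (Fbar_bot le L) \<longrightarrow> g = Fbar_bot le L)}"

definition opens :: "'a topology \<Rightarrow> 'a set set" where
  "opens X = {U. openin X U}"

definition Fbar_space :: "'a topology \<Rightarrow> ('a \<Rightarrow> ereal) set" where
  "Fbar_space X = topspace X \<rightarrow>\<^sub>E (UNIV :: ereal set)"

definition F_space :: "'a topology \<Rightarrow> ('a \<Rightarrow> real) set" where
  "F_space X = topspace X \<rightarrow>\<^sub>E (UNIV :: real set)"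

definition pointwise_le :: "'a topology \<Rightarrow> ('a \<Rightarrow> 'c::order) \<Rightarrow> ('a \<Rightarrow> 'c) \<Rightarrow> bool" where
  "pointwise_le X f g \<longleftrightarrow> (\<forall>x\<in>topspace X. f x \<le> g x)"

definition order_isomorphic :: "'p set \<Rightarrow> ('p \<Rightarrow> 'p \<Rightarrow> bool) \<Rightarrow> 'q set \<Rightarrow> ('q \<Rightarrow> 'q \<Rightarrow> bool) \<Rightarrow> bool" where
  "order_isomorphic A leA B leB \<longleftrightarrow>
     (\<exists>\<phi>. bij_betw \<phi> A B \<and> (\<forall>x\<in>A. \<forall>y\<in>A. leA x y \<longleftrightarrow> leB (\<phi> x) (\<phi> y)))"

end

(*
  In a T1 space the complement of a point is open, so a sublocale S of OX has the set of points
  pt S = {x. X - {x} \<in> S}, and S contains the sublocale induced by the subspace pt S.  This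
  makes meets, joins and pseudocomplements in coS(OX) computable, and shows that an element f
  of Fbar(OX) is determined by the sets pt f(r,---) and pt f(---,s).  At every point these sets
  form complementary rational cuts, so they are the level sets {\<phi> \<le> r} and {s \<le> \<phi>} of a
  unique \<phi> : X \<rightarrow> [-\<infinity>,+\<infinity>]; conversely every \<phi> defines such an f, monotonically in both
  directions.  Under this order isomorphism the defining condition of F(OX) says precisely that
  \<phi> never takes the values \<plusminus>\<infinity>.
*)

theory Submission
  imports Defs
begin

lemma lmeet_eqI:
  assumes "antisymp le" and "is_glb le A S x"
  shows "lmeet le A S = x"
  unfolding lmeet_def
  by (rule the_equality) (use assms in \<open>auto simp: is_glb_def antisymp_def\<close>)

lemma ljoin_eqI:
  assumes "antisymp le" and "is_lub le A S x"
  shows "ljoin le A S = x"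
  unfolding ljoin_def
  by (rule the_equality) (use assms in \<open>auto simp: is_lub_def antisymp_def\<close>)

lemma antisymp_coS_le: "antisymp coS_le"
  by (auto simp: antisymp_def coS_le_def)

lemma mem_opens [simp]: "U \<in> opens X \<longleftrightarrow> openin X U"
  by (simp add: opens_def)

lemma lmeet_opens: "lmeet (\<subseteq>) (opens X) S = X interior_of (topspace X \<inter> \<Inter>S)"
proof (rule lmeet_eqI)
  have "V \<subseteq> X interior_of (topspace X \<inter> \<Inter>S)" if "openin X V" "\<forall>U\<in>S. V \<subseteq> U" for V
    using that by (intro interior_of_maximal) (auto dest: openin_subset)
  then show "is_glb (\<subseteq>) (opens X) S (X interior_of (topspace X \<inter> \<Inter>S))"
    using interior_of_subset[of X "topspace X \<inter> \<Inter>S"] by (auto simp: is_glb_def)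
qed (simp add: antisymp_less_eq)

lemma lmeet_opens_pair:
  assumes "openin X U" and "openin X V"
  shows "lmeet (\<subseteq>) (opens X) {U, V} = U \<inter> V"
proof -
  have "topspace X \<inter> \<Inter>{U, V} = U \<inter> V"
    using assms openin_subset by auto
  then show ?thesis
    using assms by (simp add: lmeet_opens interior_of_openin openin_Int)
qed

lemma ljoin_opens:
  assumes "\<And>U. U \<in> K \<Longrightarrow> openin X U"
  shows "ljoin (\<subseteq>) (opens X) K = \<Union>K"
  by (rule ljoin_eqI) (use assms in \<open>auto simp: is_lub_def antisymp_less_eq\<close>)

definition open_imp :: "'a topology \<Rightarrow> 'a set \<Rightarrow> 'a set \<Rightarrow> 'a set" where
  "open_imp X A U = \<Union>{V. openin X V \<and> V \<inter> A \<subseteq> U}"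

lemma openin_open_imp [simp]: "openin X (open_imp X A U)"
  unfolding open_imp_def by auto

lemma open_imp_Int: "open_imp X A U \<inter> A \<subseteq> U"
  unfolding open_imp_def by auto

lemma open_imp_greatest: "openin X V \<Longrightarrow> V \<inter> A \<subseteq> U \<Longrightarrow> V \<subseteq> open_imp X A U"
  unfolding open_imp_def by auto

lemma open_imp_Int_right: "open_imp X A (U \<inter> V) = open_imp X A U \<inter> open_imp X A V"
  by (intro subset_antisym open_imp_greatest Int_greatest)
    (use open_imp_Int[of X A] in auto)

lemma heyting_opens:
  assumes "openin X A"
  shows "heyting (\<subseteq>) (opens X) A U = open_imp X A U"
proof -
  have "{V \<in> opens X. lmeet (\<subseteq>) (opens X) {V, A} \<subseteq> U} = {V. openin X V \<and> V \<inter> A \<subseteq> U}"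
    using assms lmeet_opens_pair[of X _ A] by auto
  then show ?thesis
    unfolding heyting_def open_imp_def
    using ljoin_opens[of "{V. openin X V \<and> V \<inter> A \<subseteq> U}" X] by simp
qed

section \<open>The frame of sublocales of the opens\<close>

definition opens_sublocale :: "'a topology \<Rightarrow> 'a set set \<Rightarrow> bool" where
  "opens_sublocale X S \<longleftrightarrow> S \<subseteq> opens X
     \<and> (\<forall>T \<subseteq> S. X interior_of (topspace X \<inter> \<Inter>T) \<in> S)
     \<and> (\<forall>A U. openin X A \<longrightarrow> U \<in> S \<longrightarrow> open_imp X A U \<in> S)"

lemma mem_coS_opens [simp]: "S \<in> coS (\<subseteq>) (opens X) \<longleftrightarrow> opens_sublocale X S"
  by (auto simp: coS_def sublocale_of_def opens_sublocale_def lmeet_opens heyting_opens)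

lemma opens_sublocale_openin: "opens_sublocale X S \<Longrightarrow> U \<in> S \<Longrightarrow> openin X U"
  unfolding opens_sublocale_def by auto

lemma opens_sublocale_interior_Inter:
  "opens_sublocale X S \<Longrightarrow> T \<subseteq> S \<Longrightarrow> X interior_of (topspace X \<inter> \<Inter>T) \<in> S"
  unfolding opens_sublocale_def by auto

lemma opens_sublocale_open_imp:
  "opens_sublocale X S \<Longrightarrow> openin X A \<Longrightarrow> U \<in> S \<Longrightarrow> open_imp X A U \<in> S"
  unfolding opens_sublocale_def by auto

lemma opens_sublocale_topspace: "opens_sublocale X S \<Longrightarrow> topspace X \<in> S"
  using opens_sublocale_interior_Inter[of X S "{}"] by simp

lemma opens_sublocale_Int:
  assumes "opens_sublocale X S" and "U \<in> S" and "V \<in> S"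
  shows "U \<inter> V \<in> S"
  using opens_sublocale_interior_Inter[OF assms(1), of "{U, V}"] assms
    lmeet_opens_pair[of X U V] opens_sublocale_openin[OF assms(1)]
  by (simp add: lmeet_opens)

lemma opens_sublocale_Inter:
  assumes "\<And>S. S \<in> F \<Longrightarrow> opens_sublocale X S"
  shows "opens_sublocale X (opens X \<inter> \<Inter>F)"
proof -
  have "X interior_of (topspace X \<inter> \<Inter>T) \<in> \<Inter>F" if "T \<subseteq> \<Inter>F" for T
    using that by (blast intro: opens_sublocale_interior_Inter[OF assms])
  moreover have "open_imp X A U \<in> \<Inter>F" if "openin X A" and "U \<in> \<Inter>F" for A U
    using that by (blast intro: opens_sublocale_open_imp[OF assms])
  ultimately show ?thesis
    unfolding opens_sublocale_def by auto
qed

lemma opens_sublocale_singleton: "opens_sublocale X {topspace X}"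
proof -
  have "topspace X \<inter> \<Inter>T = topspace X" if "T \<subseteq> {topspace X}" for T
    using that by auto
  moreover have "open_imp X A (topspace X) = topspace X" for A
    using openin_subset[OF openin_open_imp[of X A "topspace X"]]
      open_imp_greatest[OF openin_topspace, of X A "topspace X"] by auto
  ultimately show ?thesis
    unfolding opens_sublocale_def by auto
qed

lemma coS_join_opens:
  assumes "\<And>S. S \<in> F \<Longrightarrow> opens_sublocale X S"
  shows "coS_join (\<subseteq>) (opens X) F = opens X \<inter> \<Inter>F"
  unfolding coS_join_def
  by (rule ljoin_eqI[OF antisymp_coS_le])
    (use assms opens_sublocale_Inter[OF assms] in
      \<open>auto simp: is_lub_def coS_le_def dest: opens_sublocale_openin\<close>)

lemma coS_zero_opens: "coS_zero (\<subseteq>) (opens X) = opens X"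
  using coS_join_opens[of "{}" X] by (simp add: coS_zero_def)

lemma coS_one_opens: "coS_one (\<subseteq>) (opens X) = {topspace X}"
  unfolding coS_one_def coS_meet_def
  by (rule lmeet_eqI[OF antisymp_coS_le])
    (auto simp: is_glb_def coS_le_def opens_sublocale_singleton opens_sublocale_topspace)

definition pairwise_Int :: "'a set set \<Rightarrow> 'a set set \<Rightarrow> 'a set set" where
  "pairwise_Int S T = {U \<inter> V | U V. U \<in> S \<and> V \<in> T}"

lemma pairwise_IntE:
  assumes "W \<in> pairwise_Int S T"
  obtains U V where "U \<in> S" and "V \<in> T" and "W = U \<inter> V"
  using assms unfolding pairwise_Int_def by blast

lemma opens_sublocale_pairwise_Int:
  assumes S: "opens_sublocale X S" and T: "opens_sublocale X T"
  shows "opens_sublocale X (pairwise_Int S T)"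
  unfolding opens_sublocale_def
proof (intro conjI allI impI subsetI)
  fix W assume "W \<in> pairwise_Int S T"
  then obtain U V where "U \<in> S" "V \<in> T" "W = U \<inter> V"
    by (rule pairwise_IntE)
  then show "W \<in> opens X"
    using openin_Int[OF opens_sublocale_openin[OF S] opens_sublocale_openin[OF T]] by simp
next
  fix W assume W: "W \<subseteq> pairwise_Int S T"
  have "\<forall>w\<in>W. \<exists>UV. fst UV \<in> S \<and> snd UV \<in> T \<and> fst UV \<inter> snd UV = w"
  proof
    fix w assume "w \<in> W"
    then obtain U V where "U \<in> S" "V \<in> T" "w = U \<inter> V"
      using W by (blast elim: pairwise_IntE)
    then show "\<exists>UV. fst UV \<in> S \<and> snd UV \<in> T \<and> fst UV \<inter> snd UV = w"
      by (intro exI[of _ "(U, V)"]) simp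
  qed
  then obtain p where p: "\<And>w. w \<in> W \<Longrightarrow> fst (p w) \<in> S \<and> snd (p w) \<in> T \<and> fst (p w) \<inter> snd (p w) = w"
    by metis
  let ?U = "X interior_of (topspace X \<inter> (\<Inter>w\<in>W. fst (p w)))"
  let ?V = "X interior_of (topspace X \<inter> (\<Inter>w\<in>W. snd (p w)))"
  have "\<Inter>W = (\<Inter>w\<in>W. fst (p w) \<inter> snd (p w))"
    using p by (simp cong: INF_cong)
  then have "X interior_of (topspace X \<inter> \<Inter>W) = ?U \<inter> ?V"
    by (simp add: INT_Int_distrib Int_ac flip: interior_of_Int)
  moreover have "?U \<in> S"
    using p by (intro opens_sublocale_interior_Inter[OF S]) auto
  moreover have "?V \<in> T"
    using p by (intro opens_sublocale_interior_Inter[OF T]) auto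
  ultimately show "X interior_of (topspace X \<inter> \<Inter>W) \<in> pairwise_Int S T"
    unfolding pairwise_Int_def by blast
next
  fix A W assume A: "openin X A" and "W \<in> pairwise_Int S T"
  then obtain U V where "U \<in> S" "V \<in> T" "W = U \<inter> V"
    by (elim pairwise_IntE)
  then have "open_imp X A U \<in> S" and "open_imp X A V \<in> T"
    and "open_imp X A W = open_imp X A U \<inter> open_imp X A V"
    using opens_sublocale_open_imp[OF S A] opens_sublocale_open_imp[OF T A]
    by (simp_all add: open_imp_Int_right)
  then show "open_imp X A W \<in> pairwise_Int S T"
    unfolding pairwise_Int_def by blast
qed

lemma coS_meet_opens:
  assumes S: "opens_sublocale X S" and T: "opens_sublocale X T"
  shows "coS_meet (\<subseteq>) (opens X) {S, T} = pairwise_Int S T"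
  unfolding coS_meet_def
proof (rule lmeet_eqI[OF antisymp_coS_le])
  have "U \<in> pairwise_Int S T" if "U \<in> S" for U
  proof -
    have "U = U \<inter> topspace X"
      using openin_subset[OF opens_sublocale_openin[OF S that]] by blast
    then show ?thesis
      using that opens_sublocale_topspace[OF T] unfolding pairwise_Int_def by blast
  qed
  moreover have "V \<in> pairwise_Int S T" if "V \<in> T" for V
  proof -
    have "V = topspace X \<inter> V"
      using openin_subset[OF opens_sublocale_openin[OF T that]] by blast
    then show ?thesis
      using that opens_sublocale_topspace[OF S] unfolding pairwise_Int_def by blast
  qed
  moreover have "pairwise_Int S T \<subseteq> R" if "opens_sublocale X R" "S \<subseteq> R" "T \<subseteq> R" for R
    using that opens_sublocale_Int[of X R] unfolding pairwise_Int_def by blast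
  ultimately show "is_glb coS_le (coS (\<subseteq>) (opens X)) {S, T} (pairwise_Int S T)"
    using opens_sublocale_pairwise_Int[OF S T] unfolding is_glb_def coS_le_def by auto
qed

section \<open>Sublocales induced by subspaces\<close>

text \<open>The image of the frame embedding \<open>O(A) \<rightarrow> OX\<close> sending an open set of the subspace \<open>A\<close>
  to the largest open set of \<open>X\<close> with that trace on \<open>A\<close>.\<close>
definition subspace_sublocale :: "'a topology \<Rightarrow> 'a set \<Rightarrow> 'a set set" where
  "subspace_sublocale X A = {U. openin X U \<and> (\<forall>V. openin X V \<and> V \<inter> A \<subseteq> U \<longrightarrow> V \<subseteq> U)}"

lemma open_imp_mem_subspace_sublocale: "open_imp X A U \<in> subspace_sublocale X A"
proof -
  have "V \<subseteq> open_imp X A U" if "openin X V" and "V \<inter> A \<subseteq> open_imp X A U" for V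
    using that open_imp_Int[of X A U] by (intro open_imp_greatest) auto
  then show ?thesis
    by (simp add: subspace_sublocale_def)
qed

lemma opens_sublocale_subspace_sublocale: "opens_sublocale X (subspace_sublocale X A)"
  unfolding opens_sublocale_def
proof (intro conjI allI impI)
  show "subspace_sublocale X A \<subseteq> opens X"
    by (auto simp: subspace_sublocale_def)
next
  fix T assume T: "T \<subseteq> subspace_sublocale X A"
  let ?M = "X interior_of (topspace X \<inter> \<Inter>T)"
  have "V \<subseteq> ?M" if V: "openin X V" and "V \<inter> A \<subseteq> ?M" for V
  proof (rule interior_of_maximal[OF _ V])
    have "V \<subseteq> U" if "U \<in> T" for U
      using T that V \<open>V \<inter> A \<subseteq> ?M\<close> interior_of_subset[of X "topspace X \<inter> \<Inter>T"]
      unfolding subspace_sublocale_def by blast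
    then show "V \<subseteq> topspace X \<inter> \<Inter>T"
      using openin_subset[OF V] by blast
  qed
  then show "?M \<in> subspace_sublocale X A"
    by (auto simp: subspace_sublocale_def)
next
  fix B U assume B: "openin X B" and U: "U \<in> subspace_sublocale X A"
  have "V \<subseteq> open_imp X B U" if V: "openin X V" and "V \<inter> A \<subseteq> open_imp X B U" for V
  proof -
    have "(V \<inter> B) \<inter> A \<subseteq> U"
      using \<open>V \<inter> A \<subseteq> open_imp X B U\<close> open_imp_Int[of X B U] by blast
    then have "V \<inter> B \<subseteq> U"
      using U openin_Int[OF V B] unfolding subspace_sublocale_def by blast
    then show ?thesis
      by (rule open_imp_greatest[OF V])
  qed
  then show "open_imp X B U \<in> subspace_sublocale X A"
    by (auto simp: subspace_sublocale_def)
qed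

lemma subspace_sublocale_mono: "A \<subseteq> B \<Longrightarrow> subspace_sublocale X A \<subseteq> subspace_sublocale X B"
  unfolding subspace_sublocale_def by blast

lemma subspace_sublocale_empty: "subspace_sublocale X {} = {topspace X}"
  unfolding subspace_sublocale_def by (auto dest: openin_subset)

lemma subspace_sublocale_topspace: "topspace X \<subseteq> A \<Longrightarrow> subspace_sublocale X A = opens X"
  unfolding subspace_sublocale_def by (auto dest: openin_subset)

lemma pairwise_Int_eq_opensI:
  assumes S: "opens_sublocale X S" and T: "opens_sublocale X T"
    and cover: "topspace X \<subseteq> A \<union> B"
    and A: "subspace_sublocale X A \<subseteq> S" and B: "subspace_sublocale X B \<subseteq> T"
  shows "pairwise_Int S T = opens X"
proof
  show "pairwise_Int S T \<subseteq> opens X"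
    using opens_sublocale_pairwise_Int[OF S T] by (simp add: opens_sublocale_def)
next
  show "opens X \<subseteq> pairwise_Int S T"
  proof
    fix U assume "U \<in> opens X"
    then have U: "openin X U" by simp
    have "open_imp X A U \<inter> open_imp X B U = U"
    proof
      show "U \<subseteq> open_imp X A U \<inter> open_imp X B U"
        using open_imp_greatest[OF U] by blast
      show "open_imp X A U \<inter> open_imp X B U \<subseteq> U"
        using open_imp_Int[of X A U] open_imp_Int[of X B U] cover
          openin_subset[OF openin_open_imp[of X A U]] by blast
    qed
    moreover have "open_imp X A U \<in> S" and "open_imp X B U \<in> T"
      using A B open_imp_mem_subspace_sublocale by blast+
    ultimately show "U \<in> pairwise_Int S T"
      unfolding pairwise_Int_def by blast
  qed
qed

section \<open>Points of sublocales of a \<open>T\<^sub>1\<close> space\<close>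

definition sublocale_points :: "'a topology \<Rightarrow> 'a set set \<Rightarrow> 'a set" where
  "sublocale_points X S = {x \<in> topspace X. topspace X - {x} \<in> S}"

context
  fixes X :: "'a topology"
  assumes t1: "t1_space X"
begin

lemma openin_topspace_Diff_singleton: "openin X (topspace X - {x})"
  using t1 by (simp add: t1_space_openin_delete_alt)

lemma topspace_Diff_singleton_mem_subspace_sublocale:
  assumes x: "x \<in> topspace X"
  shows "topspace X - {x} \<in> subspace_sublocale X A \<longleftrightarrow> x \<in> A"
proof
  assume "topspace X - {x} \<in> subspace_sublocale X A"
  then have "topspace X \<subseteq> topspace X - {x}" if "x \<notin> A"
    using that unfolding subspace_sublocale_def by blast
  then show "x \<in> A"
    using x by blast
qed (use openin_topspace_Diff_singleton openin_subset in \<open>auto simp: subspace_sublocale_def\<close>)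

text \<open>An open set \<open>U\<close> of the subspace sublocale of the points of \<open>S\<close> is the interior of the
  intersection of the complements of the points of \<open>S\<close> outside \<open>U\<close>, and these complements
  lie in \<open>S\<close>.\<close>
lemma subspace_sublocale_points_subset:
  assumes S: "opens_sublocale X S"
  shows "subspace_sublocale X (sublocale_points X S) \<subseteq> S"
proof
  fix U assume U: "U \<in> subspace_sublocale X (sublocale_points X S)"
  then have "openin X U"
    by (simp add: subspace_sublocale_def)
  let ?C = "(\<lambda>y. topspace X - {y}) ` (sublocale_points X S - U)"
  let ?M = "X interior_of (topspace X \<inter> \<Inter>?C)"
  have "U \<subseteq> ?M"
    using openin_subset[OF \<open>openin X U\<close>] by (intro interior_of_maximal[OF _ \<open>openin X U\<close>]) blast
  moreover have "?M \<inter> sublocale_points X S \<subseteq> U"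
  proof
    fix y assume y: "y \<in> ?M \<inter> sublocale_points X S"
    show "y \<in> U"
    proof (rule ccontr)
      assume "y \<notin> U"
      then have "?M \<subseteq> topspace X - {y}"
        using y interior_of_subset[of X "topspace X \<inter> \<Inter>?C"] by blast
      then show False
        using y by blast
    qed
  qed
  then have "?M \<subseteq> U"
    using U openin_interior_of unfolding subspace_sublocale_def by blast
  moreover have "?M \<in> S"
    by (rule opens_sublocale_interior_Inter[OF S]) (auto simp: sublocale_points_def)
  ultimately show "U \<in> S"
    by (metis subset_antisym)
qed

lemma sublocale_points_cover:
  assumes S: "opens_sublocale X S" and T: "opens_sublocale X T"
    and ST: "pairwise_Int S T = opens X"
  shows "topspace X \<subseteq> sublocale_points X S \<union> sublocale_points X T"
proof
  fix x assume x: "x \<in> topspace X"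
  then obtain U V where "U \<in> S" "V \<in> T" and UV: "topspace X - {x} = U \<inter> V"
    using ST openin_topspace_Diff_singleton by (metis mem_opens pairwise_IntE)
  have "U \<subseteq> topspace X" "V \<subseteq> topspace X"
    using \<open>U \<in> S\<close> \<open>V \<in> T\<close> opens_sublocale_openin[OF S] opens_sublocale_openin[OF T]
    by (auto dest: openin_subset)
  then have "U = topspace X - {x} \<or> V = topspace X - {x}"
    using UV x by blast
  then show "x \<in> sublocale_points X S \<union> sublocale_points X T"
    using x \<open>U \<in> S\<close> \<open>V \<in> T\<close> unfolding sublocale_points_def by blast
qed

lemma coS_pc_opens:
  assumes S: "opens_sublocale X S"
  shows "coS_pc (\<subseteq>) (opens X) S = subspace_sublocale X (topspace X - sublocale_points X S)"
    (is "_ = ?C")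
proof -
  have disjoint: "{R \<in> coS (\<subseteq>) (opens X). coS_meet (\<subseteq>) (opens X) {R, S} = coS_zero (\<subseteq>) (opens X)}
      = {R. opens_sublocale X R \<and> pairwise_Int R S = opens X}"
    using coS_meet_opens[OF _ S] by (auto simp: coS_zero_opens)
  have "pairwise_Int ?C S = opens X"
    by (rule pairwise_Int_eq_opensI[OF opens_sublocale_subspace_sublocale S _ order_refl
          subspace_sublocale_points_subset[OF S]]) blast
  moreover have "?C \<subseteq> R" if "opens_sublocale X R" and "pairwise_Int R S = opens X" for R
  proof -
    have "topspace X - sublocale_points X S \<subseteq> sublocale_points X R"
      using sublocale_points_cover[OF that(1) S that(2)] by blast
    then show ?thesis
      using subspace_sublocale_mono subspace_sublocale_points_subset[OF that(1)] by blast
  qed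
  moreover have "?C \<subseteq> opens X"
    by (auto simp: subspace_sublocale_def)
  ultimately have "opens X \<inter> \<Inter>{R. opens_sublocale X R \<and> pairwise_Int R S = opens X} = ?C"
    using opens_sublocale_subspace_sublocale[of X] by blast
  then show ?thesis
    unfolding coS_pc_def disjoint by (subst coS_join_opens) auto
qed

end

lemma ereal_of_rat_dense:
  fixes a b :: ereal
  assumes "a < b"
  obtains q :: rat where "a < ereal (of_rat q)" and "ereal (of_rat q) < b"
proof -
  obtain x where x: "a < ereal x" "ereal x < b"
    using ereal_dense2[OF assms] by blast
  obtain y where y: "ereal x < ereal y" "ereal y < b"
    using ereal_dense2[OF x(2)] by blast
  obtain q :: rat where "x < of_rat q" "of_rat q < y"
    using of_rat_dense[of x y] y(1) by auto
  then have "ereal x < ereal (of_rat q)" and "ereal (of_rat q) < ereal y"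
    by simp_all
  show ?thesis
  proof
    show "a < ereal (of_rat q)"
      using x(1) \<open>ereal x < ereal (of_rat q)\<close> by (rule less_trans)
    show "ereal (of_rat q) < b"
      using \<open>ereal (of_rat q) < ereal y\<close> y(2) by (rule less_trans)
  qed
qed

lemma ereal_le_of_rat_iff: "e \<le> ereal (of_rat r) \<longleftrightarrow> (\<forall>s>r. e < ereal (of_rat s))"
proof
  assume H: "\<forall>s>r. e < ereal (of_rat s)"
  show "e \<le> ereal (of_rat r)"
  proof (rule ccontr)
    assume "\<not> e \<le> ereal (of_rat r)"
    then have "ereal (of_rat r) < e"
      by simp
    then obtain q where "ereal (of_rat r) < ereal (of_rat q)" and "ereal (of_rat q) < e"
      by (rule ereal_of_rat_dense)
    then have "r < q" and "ereal (of_rat q) < e"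
      by (simp_all add: of_rat_less)
    then show False
      using H less_asym by blast
  qed
next
  assume "e \<le> ereal (of_rat r)"
  then show "\<forall>s>r. e < ereal (of_rat s)"
    by (auto simp: of_rat_less intro: le_less_trans[of e "ereal (of_rat r)"])
qed

lemma of_rat_le_ereal_iff: "ereal (of_rat s) \<le> e \<longleftrightarrow> (\<forall>r<s. ereal (of_rat r) < e)"
proof
  assume H: "\<forall>r<s. ereal (of_rat r) < e"
  show "ereal (of_rat s) \<le> e"
  proof (rule ccontr)
    assume "\<not> ereal (of_rat s) \<le> e"
    then have "e < ereal (of_rat s)"
      by simp
    then obtain q where "e < ereal (of_rat q)" and "ereal (of_rat q) < ereal (of_rat s)"
      by (rule ereal_of_rat_dense)
    then have "q < s" and "e < ereal (of_rat q)"
      by (simp_all add: of_rat_less)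
    then show False
      using H less_asym by blast
  qed
next
  assume "ereal (of_rat s) \<le> e"
  then show "\<forall>r<s. ereal (of_rat r) < e"
    by (auto simp: of_rat_less intro: less_le_trans[of _ "ereal (of_rat s)" e])
qed

lemma rat_cut_ereal:
  fixes P Q :: "rat \<Rightarrow> bool"
  assumes P: "\<And>r. P r \<longleftrightarrow> (\<forall>s>r. P s)" and Q: "\<And>s. Q s \<longleftrightarrow> (\<forall>r<s. Q r)"
    and cover: "\<And>r. P r \<or> Q r" and disjoint: "\<And>r s. r < s \<Longrightarrow> P r \<Longrightarrow> Q s \<Longrightarrow> False"
  shows "P r \<longleftrightarrow> Inf {ereal (of_rat q) | q. P q} \<le> ereal (of_rat r)" (is "_ \<longleftrightarrow> ?e \<le> _")
    and "Q s \<longleftrightarrow> ereal (of_rat s) \<le> Inf {ereal (of_rat q) | q. P q}"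
proof -
  have P_iff: "P r \<longleftrightarrow> ?e \<le> ereal (of_rat r)" for r
  proof
    assume "?e \<le> ereal (of_rat r)"
    have "P s" if "r < s" for s
    proof -
      have "?e < ereal (of_rat s)"
        using \<open>?e \<le> ereal (of_rat r)\<close> that by (simp add: ereal_le_of_rat_iff)
      then obtain q where "P q" and "q < s"
        by (auto simp: Inf_less_iff of_rat_less)
      then show "P s"
        using P[of q] by blast
    qed
    then show "P r"
      using P by blast
  qed (auto intro: Inf_lower)
  then show "P r \<longleftrightarrow> ?e \<le> ereal (of_rat r)" .
  show "Q s \<longleftrightarrow> ereal (of_rat s) \<le> ?e"
  proof
    assume "Q s"
    then have "s \<le> q" if "P q" for q
      using disjoint[of q s] that by (meson not_le)
    then show "ereal (of_rat s) \<le> ?e"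
      by (auto intro!: Inf_greatest simp: of_rat_less_eq)
  next
    assume "ereal (of_rat s) \<le> ?e"
    then have "\<not> P r" if "r < s" for r
      using that P_iff[of r] by (auto simp: of_rat_le_ereal_iff)
    then show "Q s"
      using Q cover by blast
  qed
qed

lemma all_max_PInfty_cancel_iff:
  fixes \<phi> :: "'a \<Rightarrow> ereal"
  shows "(\<forall>\<psi>. (\<forall>x\<in>A. max (\<phi> x) (\<psi> x) = \<infinity>) \<longrightarrow> (\<forall>x\<in>A. \<psi> x = \<infinity>)) \<longleftrightarrow> (\<forall>x\<in>A. \<phi> x \<noteq> \<infinity>)"
proof
  assume H: "\<forall>\<psi>. (\<forall>x\<in>A. max (\<phi> x) (\<psi> x) = \<infinity>) \<longrightarrow> (\<forall>x\<in>A. \<psi> x = \<infinity>)"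
  show "\<forall>x\<in>A. \<phi> x \<noteq> \<infinity>"
  proof (intro ballI notI)
    fix x assume "x \<in> A" and "\<phi> x = \<infinity>"
    then show False
      using spec[OF H, of "\<lambda>y. if y = x then -\<infinity> else \<infinity>"] by auto
  qed
qed (auto simp: max_def)

lemma all_min_MInfty_cancel_iff:
  fixes \<phi> :: "'a \<Rightarrow> ereal"
  shows "(\<forall>\<psi>. (\<forall>x\<in>A. min (\<phi> x) (\<psi> x) = -\<infinity>) \<longrightarrow> (\<forall>x\<in>A. \<psi> x = -\<infinity>)) \<longleftrightarrow> (\<forall>x\<in>A. \<phi> x \<noteq> -\<infinity>)"
proof
  assume H: "\<forall>\<psi>. (\<forall>x\<in>A. min (\<phi> x) (\<psi> x) = -\<infinity>) \<longrightarrow> (\<forall>x\<in>A. \<psi> x = -\<infinity>)"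
  show "\<forall>x\<in>A. \<phi> x \<noteq> -\<infinity>"
  proof (intro ballI notI)
    fix x assume "x \<in> A" and "\<phi> x = -\<infinity>"
    then show False
      using spec[OF H, of "\<lambda>y. if y = x then \<infinity> else -\<infinity>"] by auto
  qed
qed (auto simp: min_def)

section \<open>The localic function of an extended real function\<close>

definition level_below :: "'a topology \<Rightarrow> ('a \<Rightarrow> ereal) \<Rightarrow> rat \<Rightarrow> 'a set" where
  "level_below X \<phi> s = {x \<in> topspace X. \<phi> x < ereal (of_rat s)}"

definition level_above :: "'a topology \<Rightarrow> ('a \<Rightarrow> ereal) \<Rightarrow> rat \<Rightarrow> 'a set" where
  "level_above X \<phi> r = {x \<in> topspace X. ereal (of_rat r) < \<phi> x}"

text \<open>The generator \<open>(r,---)\<close> goes to the sublocale on which \<open>\<phi> \<le> r\<close> and \<open>(---,s)\<close> to the one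
  on which \<open>s \<le> \<phi>\<close>; writing them as meets of subspace sublocales of strict level sets makes
  relations (r3) and (r4) immediate.\<close>
definition lower_sublocale :: "'a topology \<Rightarrow> ('a \<Rightarrow> ereal) \<Rightarrow> rat \<Rightarrow> 'a set set" where
  "lower_sublocale X \<phi> r = opens X \<inter> \<Inter>{subspace_sublocale X (level_below X \<phi> s) | s. r < s}"

definition upper_sublocale :: "'a topology \<Rightarrow> ('a \<Rightarrow> ereal) \<Rightarrow> rat \<Rightarrow> 'a set set" where
  "upper_sublocale X \<phi> s = opens X \<inter> \<Inter>{subspace_sublocale X (level_above X \<phi> r) | r. r < s}"

definition localic_fun :: "'a topology \<Rightarrow> ('a \<Rightarrow> ereal) \<Rightarrow> (rat \<Rightarrow> 'a set set) \<times> (rat \<Rightarrow> 'a set set)"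
  where "localic_fun X \<phi> = (lower_sublocale X \<phi>, upper_sublocale X \<phi>)"

lemma opens_sublocale_lower_sublocale: "opens_sublocale X (lower_sublocale X \<phi> r)"
  unfolding lower_sublocale_def
  by (rule opens_sublocale_Inter) (auto simp: opens_sublocale_subspace_sublocale)

lemma opens_sublocale_upper_sublocale: "opens_sublocale X (upper_sublocale X \<phi> s)"
  unfolding upper_sublocale_def
  by (rule opens_sublocale_Inter) (auto simp: opens_sublocale_subspace_sublocale)

lemma mem_lower_sublocale:
  "U \<in> lower_sublocale X \<phi> r \<longleftrightarrow> openin X U \<and> (\<forall>s>r. U \<in> subspace_sublocale X (level_below X \<phi> s))"
  by (auto simp: lower_sublocale_def)

lemma mem_upper_sublocale:
  "U \<in> upper_sublocale X \<phi> s \<longleftrightarrow> openin X U \<and> (\<forall>r<s. U \<in> subspace_sublocale X (level_above X \<phi> r))"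
  by (auto simp: upper_sublocale_def)

lemma lower_sublocale_Inter:
  "lower_sublocale X \<phi> r = opens X \<inter> \<Inter>{lower_sublocale X \<phi> s | s. r < s}"
proof (intro subset_antisym subsetI)
  fix U assume "U \<in> lower_sublocale X \<phi> r"
  then show "U \<in> opens X \<inter> \<Inter>{lower_sublocale X \<phi> s | s. r < s}"
    by (auto simp: mem_lower_sublocale)
next
  fix U assume U: "U \<in> opens X \<inter> \<Inter>{lower_sublocale X \<phi> s | s. r < s}"
  have "U \<in> subspace_sublocale X (level_below X \<phi> t)" if rt: "r < t" for t
  proof -
    obtain s where "r < s" and "s < t"
      using dense[OF rt] by blast
    then show ?thesis
      using U by (auto simp: mem_lower_sublocale)
  qed
  then show "U \<in> lower_sublocale X \<phi> r"
    using U by (simp add: mem_lower_sublocale)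
qed

lemma upper_sublocale_Inter:
  "upper_sublocale X \<phi> s = opens X \<inter> \<Inter>{upper_sublocale X \<phi> r | r. r < s}"
proof (intro subset_antisym subsetI)
  fix U assume "U \<in> upper_sublocale X \<phi> s"
  then show "U \<in> opens X \<inter> \<Inter>{upper_sublocale X \<phi> r | r. r < s}"
    by (auto simp: mem_upper_sublocale)
next
  fix U assume U: "U \<in> opens X \<inter> \<Inter>{upper_sublocale X \<phi> r | r. r < s}"
  have "U \<in> subspace_sublocale X (level_above X \<phi> t)" if ts: "t < s" for t
  proof -
    obtain r where "t < r" and "r < s"
      using dense[OF ts] by blast
    then show ?thesis
      using U by (auto simp: mem_upper_sublocale)
  qed
  then show "U \<in> upper_sublocale X \<phi> s"
    using U by (simp add: mem_upper_sublocale)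
qed

lemma subspace_sublocale_subset_lower_sublocale:
  "subspace_sublocale X {x \<in> topspace X. \<phi> x \<le> ereal (of_rat r)} \<subseteq> lower_sublocale X \<phi> r"
proof
  fix U assume U: "U \<in> subspace_sublocale X {x \<in> topspace X. \<phi> x \<le> ereal (of_rat r)}"
  have "{x \<in> topspace X. \<phi> x \<le> ereal (of_rat r)} \<subseteq> level_below X \<phi> s" if "r < s" for s
    using that by (auto simp: level_below_def ereal_le_of_rat_iff)
  then have "U \<in> subspace_sublocale X (level_below X \<phi> s)" if "r < s" for s
    using U subspace_sublocale_mono that by blast
  moreover have "openin X U"
    using U by (simp add: subspace_sublocale_def)
  ultimately show "U \<in> lower_sublocale X \<phi> r"
    by (simp add: mem_lower_sublocale)
qed

lemma subspace_sublocale_subset_upper_sublocale: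
  "subspace_sublocale X {x \<in> topspace X. ereal (of_rat s) \<le> \<phi> x} \<subseteq> upper_sublocale X \<phi> s"
proof
  fix U assume U: "U \<in> subspace_sublocale X {x \<in> topspace X. ereal (of_rat s) \<le> \<phi> x}"
  have "{x \<in> topspace X. ereal (of_rat s) \<le> \<phi> x} \<subseteq> level_above X \<phi> r" if "r < s" for r
    using that by (auto simp: level_above_def of_rat_le_ereal_iff)
  then have "U \<in> subspace_sublocale X (level_above X \<phi> r)" if "r < s" for r
    using U subspace_sublocale_mono that by blast
  moreover have "openin X U"
    using U by (simp add: subspace_sublocale_def)
  ultimately show "U \<in> upper_sublocale X \<phi> s"
    by (simp add: mem_upper_sublocale)
qed

lemma localic_fun_cong:
  assumes "\<And>x. x \<in> topspace X \<Longrightarrow> \<phi> x = \<psi> x"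
  shows "localic_fun X \<phi> = localic_fun X \<psi>"
proof -
  have "level_below X \<phi> = level_below X \<psi>" and "level_above X \<phi> = level_above X \<psi>"
    using assms by (auto simp: fun_eq_iff level_below_def level_above_def)
  then show ?thesis
    by (simp add: localic_fun_def fun_eq_iff lower_sublocale_def upper_sublocale_def)
qed

lemma localic_fun_mono:
  assumes "\<And>x. x \<in> topspace X \<Longrightarrow> \<phi> x \<le> \<psi> x"
  shows "Fbar_le (localic_fun X \<phi>) (localic_fun X \<psi>)"
proof -
  have "level_below X \<psi> s \<subseteq> level_below X \<phi> s" and "level_above X \<phi> s \<subseteq> level_above X \<psi> s" for s
    using assms by (auto simp: level_below_def level_above_def intro: le_less_trans less_le_trans)
  then have "subspace_sublocale X (level_below X \<psi> s) \<subseteq> subspace_sublocale X (level_below X \<phi> s)"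
    and "subspace_sublocale X (level_above X \<phi> s) \<subseteq> subspace_sublocale X (level_above X \<psi> s)" for s
    by (simp_all add: subspace_sublocale_mono)
  then show ?thesis
    unfolding Fbar_le_def coS_le_def localic_fun_def
    by (auto simp: mem_lower_sublocale mem_upper_sublocale) blast+
qed

lemma Fbar_top_eq: "Fbar_top (\<subseteq>) (opens X) = localic_fun X (\<lambda>_. \<infinity>)"
proof -
  have "lower_sublocale X (\<lambda>_. \<infinity>) r = {topspace X}" for r
    using gt_ex[of r] by (auto simp: lower_sublocale_def level_below_def subspace_sublocale_empty)
  moreover have "upper_sublocale X (\<lambda>_. \<infinity>) s = opens X" for s
    by (auto simp: upper_sublocale_def level_above_def subspace_sublocale_topspace)
  ultimately show ?thesis
    by (simp add: Fbar_top_def localic_fun_def coS_one_opens coS_zero_opens fun_eq_iff)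
qed

lemma Fbar_bot_eq: "Fbar_bot (\<subseteq>) (opens X) = localic_fun X (\<lambda>_. -\<infinity>)"
proof -
  have "lower_sublocale X (\<lambda>_. -\<infinity>) r = opens X" for r
    by (auto simp: lower_sublocale_def level_below_def subspace_sublocale_topspace)
  moreover have "upper_sublocale X (\<lambda>_. -\<infinity>) s = {topspace X}" for s
    using lt_ex[of s] by (auto simp: upper_sublocale_def level_above_def subspace_sublocale_empty)
  ultimately show ?thesis
    by (simp add: Fbar_bot_def localic_fun_def coS_one_opens coS_zero_opens fun_eq_iff)
qed

context
  fixes X :: "'a topology"
  assumes t1: "t1_space X"
begin

lemma sublocale_points_lower_sublocale:
  "sublocale_points X (lower_sublocale X \<phi> r) = {x \<in> topspace X. \<phi> x \<le> ereal (of_rat r)}"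
proof -
  have "x \<in> sublocale_points X (lower_sublocale X \<phi> r)
      \<longleftrightarrow> x \<in> topspace X \<and> (\<forall>s>r. \<phi> x < ereal (of_rat s))" for x
    by (auto simp: sublocale_points_def mem_lower_sublocale openin_topspace_Diff_singleton[OF t1]
        topspace_Diff_singleton_mem_subspace_sublocale[OF t1] level_below_def)
  then show ?thesis
    by (auto simp: ereal_le_of_rat_iff)
qed

lemma sublocale_points_upper_sublocale:
  "sublocale_points X (upper_sublocale X \<phi> s) = {x \<in> topspace X. ereal (of_rat s) \<le> \<phi> x}"
proof -
  have "x \<in> sublocale_points X (upper_sublocale X \<phi> s)
      \<longleftrightarrow> x \<in> topspace X \<and> (\<forall>r<s. ereal (of_rat r) < \<phi> x)" for x
    by (auto simp: sublocale_points_def mem_upper_sublocale openin_topspace_Diff_singleton[OF t1]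
        topspace_Diff_singleton_mem_subspace_sublocale[OF t1] level_above_def)
  then show ?thesis
    by (auto simp: of_rat_le_ereal_iff)
qed

text \<open>The third to fifth conjuncts are the relations (r1), (r3) and (r4); the last one is the
  pseudocomplement condition.\<close>
lemma mem_Fbar_frame_opens_iff:
  "(a, b) \<in> Fbar_frame (\<subseteq>) (opens X) \<longleftrightarrow>
     (\<forall>r. opens_sublocale X (a r)) \<and> (\<forall>s. opens_sublocale X (b s)) \<and>
     (\<forall>r s. s \<le> r \<longrightarrow> pairwise_Int (a r) (b s) = opens X) \<and>
     (\<forall>r. a r = opens X \<inter> \<Inter>{a s | s. r < s}) \<and>
     (\<forall>s. b s = opens X \<inter> \<Inter>{b r | r. r < s}) \<and>
     (\<forall>r s. r < s \<longrightarrow>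
        b s \<subseteq> subspace_sublocale X (topspace X - sublocale_points X (a r)) \<and>
        a r \<subseteq> subspace_sublocale X (topspace X - sublocale_points X (b s)))"
proof (cases "(\<forall>r. opens_sublocale X (a r)) \<and> (\<forall>s. opens_sublocale X (b s))")
  case True
  have "coS_meet (\<subseteq>) (opens X) {a r, b s} = pairwise_Int (a r) (b s)" for r s
    using True by (simp add: coS_meet_opens)
  moreover have "coS_join (\<subseteq>) (opens X) {a s | s. r < s} = opens X \<inter> \<Inter>{a s | s. r < s}"
    and "coS_join (\<subseteq>) (opens X) {b r | r. r < s} = opens X \<inter> \<Inter>{b r | r. r < s}" for r s
    by (rule coS_join_opens, use True in blast)+
  moreover have
    "coS_pc (\<subseteq>) (opens X) (a r) = subspace_sublocale X (topspace X - sublocale_points X (a r))"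
    and
    "coS_pc (\<subseteq>) (opens X) (b s) = subspace_sublocale X (topspace X - sublocale_points X (b s))"
    for r s
    using True by (simp_all add: coS_pc_opens[OF t1])
  ultimately show ?thesis
    using True by (simp add: Fbar_frame_def frame_hom_LIR_def coS_le_def coS_zero_opens)
qed (auto simp: Fbar_frame_def frame_hom_LIR_def)

lemma localic_fun_mem_Fbar_frame: "localic_fun X \<phi> \<in> Fbar_frame (\<subseteq>) (opens X)"
  unfolding localic_fun_def mem_Fbar_frame_opens_iff
proof (intro conjI allI impI)
  fix r s :: rat
  assume "s \<le> r"
  then have "\<phi> x \<le> ereal (of_rat r) \<or> ereal (of_rat s) \<le> \<phi> x" for x
    by (metis ereal_less_eq(3) le_cases of_rat_less_eq order_trans)
  then have "topspace X
      \<subseteq> {x \<in> topspace X. \<phi> x \<le> ereal (of_rat r)} \<union> {x \<in> topspace X. ereal (of_rat s) \<le> \<phi> x}"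
    by blast
  then show "pairwise_Int (lower_sublocale X \<phi> r) (upper_sublocale X \<phi> s) = opens X"
    by (rule pairwise_Int_eq_opensI[OF opens_sublocale_lower_sublocale
          opens_sublocale_upper_sublocale _ subspace_sublocale_subset_lower_sublocale
          subspace_sublocale_subset_upper_sublocale])
next
  fix r s :: rat
  assume "r < s"
  have "topspace X - sublocale_points X (lower_sublocale X \<phi> r) = level_above X \<phi> r"
    and "topspace X - sublocale_points X (upper_sublocale X \<phi> s) = level_below X \<phi> s"
    by (auto simp: sublocale_points_lower_sublocale sublocale_points_upper_sublocale
        level_above_def level_below_def)
  with \<open>r < s\<close> show "upper_sublocale X \<phi> s
      \<subseteq> subspace_sublocale X (topspace X - sublocale_points X (lower_sublocale X \<phi> r))"
    and "lower_sublocale X \<phi> r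
      \<subseteq> subspace_sublocale X (topspace X - sublocale_points X (upper_sublocale X \<phi> s))"
    by (auto simp: lower_sublocale_def upper_sublocale_def)
qed (simp_all add: opens_sublocale_lower_sublocale opens_sublocale_upper_sublocale
    flip: lower_sublocale_Inter upper_sublocale_Inter)

lemma localic_fun_le_iff:
  "Fbar_le (localic_fun X \<phi>) (localic_fun X \<psi>) \<longleftrightarrow> (\<forall>x\<in>topspace X. \<phi> x \<le> \<psi> x)"
proof
  assume "Fbar_le (localic_fun X \<phi>) (localic_fun X \<psi>)"
  then have "sublocale_points X (lower_sublocale X \<psi> r) \<subseteq> sublocale_points X (lower_sublocale X \<phi> r)"
    for r
    by (auto simp: Fbar_le_def coS_le_def localic_fun_def sublocale_points_def)
  then have le: "\<psi> x \<le> ereal (of_rat r) \<Longrightarrow> \<phi> x \<le> ereal (of_rat r)" if "x \<in> topspace X" for x r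
    using that by (auto simp: sublocale_points_lower_sublocale)
  show "\<forall>x\<in>topspace X. \<phi> x \<le> \<psi> x"
  proof (intro ballI, rule ccontr)
    fix x assume "x \<in> topspace X" and "\<not> \<phi> x \<le> \<psi> x"
    then obtain q where "\<psi> x < ereal (of_rat q)" and "ereal (of_rat q) < \<phi> x"
      by (auto simp: not_le elim: ereal_of_rat_dense)
    then show False
      using le[OF \<open>x \<in> topspace X\<close>, of q] by (meson less_imp_le leD)
  qed
qed (simp add: localic_fun_mono)

lemma localic_fun_eq_iff:
  "localic_fun X \<phi> = localic_fun X \<psi> \<longleftrightarrow> (\<forall>x\<in>topspace X. \<phi> x = \<psi> x)"
  by (metis localic_fun_cong localic_fun_le_iff order_antisym order_refl)

lemma Fbar_frame_opensD:
  assumes "(a, b) \<in> Fbar_frame (\<subseteq>) (opens X)"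
  shows "opens_sublocale X (a r)" and "opens_sublocale X (b s)"
    and "s \<le> r \<Longrightarrow> pairwise_Int (a r) (b s) = opens X"
    and "a r = opens X \<inter> \<Inter>{a s | s. r < s}" and "b s = opens X \<inter> \<Inter>{b r | r. r < s}"
    and "r < s \<Longrightarrow> b s \<subseteq> subspace_sublocale X (topspace X - sublocale_points X (a r))"
    and "r < s \<Longrightarrow> a r \<subseteq> subspace_sublocale X (topspace X - sublocale_points X (b s))"
  using assms unfolding mem_Fbar_frame_opens_iff by meson+

lemma Fbar_frame_opens_eq_points:
  assumes ab: "(a, b) \<in> Fbar_frame (\<subseteq>) (opens X)"
  shows "a r = opens X \<inter> \<Inter>{subspace_sublocale X (topspace X - sublocale_points X (b s)) | s. r < s}"
    and "b s = opens X \<inter> \<Inter>{subspace_sublocale X (topspace X - sublocale_points X (a r)) | r. r < s}"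
proof -
  note a = Fbar_frame_opensD(1)[OF ab] and b = Fbar_frame_opensD(2)[OF ab]
  have "topspace X - sublocale_points X (b s) \<subseteq> sublocale_points X (a s)"
    and "topspace X - sublocale_points X (a s) \<subseteq> sublocale_points X (b s)" for s
    using sublocale_points_cover[OF t1 a b Fbar_frame_opensD(3)[OF ab order_refl]] by blast+
  then have sub_a: "subspace_sublocale X (topspace X - sublocale_points X (b s)) \<subseteq> a s"
    and sub_b: "subspace_sublocale X (topspace X - sublocale_points X (a s)) \<subseteq> b s" for s
    using subspace_sublocale_mono subspace_sublocale_points_subset[OF t1] a b
    by (meson order_trans)+
  have open_a: "a r \<subseteq> opens X" and open_b: "b r \<subseteq> opens X" for r
    using opens_sublocale_openin[OF a] opens_sublocale_openin[OF b] by auto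
  show "a r = opens X \<inter> \<Inter>{subspace_sublocale X (topspace X - sublocale_points X (b s)) | s. r < s}"
  proof (rule subset_antisym)
    have "opens X \<inter> \<Inter>{subspace_sublocale X (topspace X - sublocale_points X (b s)) | s. r < s}
        \<subseteq> opens X \<inter> \<Inter>{a s | s. r < s}"
      using sub_a by blast
    then show "opens X \<inter> \<Inter>{subspace_sublocale X (topspace X - sublocale_points X (b s)) | s. r < s}
        \<subseteq> a r"
      by (subst Fbar_frame_opensD(4)[OF ab])
  qed (use open_a Fbar_frame_opensD(7)[OF ab] in blast)
  show "b s = opens X \<inter> \<Inter>{subspace_sublocale X (topspace X - sublocale_points X (a r)) | r. r < s}"
  proof (rule subset_antisym)
    have "opens X \<inter> \<Inter>{subspace_sublocale X (topspace X - sublocale_points X (a r)) | r. r < s}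
        \<subseteq> opens X \<inter> \<Inter>{b r | r. r < s}"
      using sub_b by blast
    then show "opens X \<inter> \<Inter>{subspace_sublocale X (topspace X - sublocale_points X (a r)) | r. r < s}
        \<subseteq> b s"
      by (subst Fbar_frame_opensD(5)[OF ab])
  qed (use open_b Fbar_frame_opensD(6)[OF ab] in blast)
qed

text \<open>At each point \<open>x\<close>, relations (r3) and (r4) make \<open>x \<in> sublocale_points X (a r)\<close> and
  \<open>x \<in> sublocale_points X (b s)\<close> an upper and a lower rational cut, (r1) makes them cover
  \<open>\<rat>\<close> and the pseudocomplement conditions make them disjoint.\<close>
lemma Fbar_frame_opens_points_level_sets:
  assumes "(a, b) \<in> Fbar_frame (\<subseteq>) (opens X)"
  obtains \<phi> where "\<And>r. sublocale_points X (a r) = {x \<in> topspace X. \<phi> x \<le> ereal (of_rat r)}"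
    and "\<And>s. sublocale_points X (b s) = {x \<in> topspace X. ereal (of_rat s) \<le> \<phi> x}"
proof -
  note a = Fbar_frame_opensD(1)[OF assms] and b = Fbar_frame_opensD(2)[OF assms]
    and full = Fbar_frame_opensD(3)[OF assms order_refl]
    and a_Inter = Fbar_frame_opensD(4)[OF assms] and b_Inter = Fbar_frame_opensD(5)[OF assms]
    and b_pc = Fbar_frame_opensD(6)[OF assms]
  define \<phi> where "\<phi> x = Inf {ereal (of_rat q) | q. x \<in> sublocale_points X (a q)}" for x
  have "x \<in> sublocale_points X (a r) \<longleftrightarrow> \<phi> x \<le> ereal (of_rat r)"
    and "x \<in> sublocale_points X (b s) \<longleftrightarrow> ereal (of_rat s) \<le> \<phi> x"
    if x: "x \<in> topspace X" for x r s
  proof -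
    have upward: "x \<in> sublocale_points X (a r) \<longleftrightarrow> (\<forall>s>r. x \<in> sublocale_points X (a s))" for r
      using x by (subst a_Inter[of r])
        (auto simp: sublocale_points_def openin_topspace_Diff_singleton[OF t1])
    have downward: "x \<in> sublocale_points X (b s) \<longleftrightarrow> (\<forall>r<s. x \<in> sublocale_points X (b r))" for s
      using x by (subst b_Inter[of s])
        (auto simp: sublocale_points_def openin_topspace_Diff_singleton[OF t1])
    have cover: "x \<in> sublocale_points X (a r) \<or> x \<in> sublocale_points X (b r)" for r
      using sublocale_points_cover[OF t1 a b full] x by blast
    have disjoint: False
      if "r < s" and "x \<in> sublocale_points X (a r)" and "x \<in> sublocale_points X (b s)" for r s
      using b_pc[OF that(1)] that(2,3) topspace_Diff_singleton_mem_subspace_sublocale[OF t1 x]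
      unfolding sublocale_points_def by blast
    note cut = rat_cut_ereal[OF upward downward cover disjoint]
    show "x \<in> sublocale_points X (a r) \<longleftrightarrow> \<phi> x \<le> ereal (of_rat r)"
      unfolding \<phi>_def by (rule cut(1))
    show "x \<in> sublocale_points X (b s) \<longleftrightarrow> ereal (of_rat s) \<le> \<phi> x"
      unfolding \<phi>_def by (rule cut(2))
  qed
  moreover have "sublocale_points X S \<subseteq> topspace X" for S
    by (auto simp: sublocale_points_def)
  ultimately show ?thesis
    by (intro that[of \<phi>]) blast+
qed

lemma localic_fun_surj:
  assumes "f \<in> Fbar_frame (\<subseteq>) (opens X)"
  obtains \<phi> where "localic_fun X \<phi> = f"
proof -
  obtain a b where f: "f = (a, b)"
    by (cases f)
  with assms have ab: "(a, b) \<in> Fbar_frame (\<subseteq>) (opens X)"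
    by simp
  obtain \<phi> where a_points: "\<And>r. sublocale_points X (a r) = {x \<in> topspace X. \<phi> x \<le> ereal (of_rat r)}"
    and b_points: "\<And>s. sublocale_points X (b s) = {x \<in> topspace X. ereal (of_rat s) \<le> \<phi> x}"
    using Fbar_frame_opens_points_level_sets[OF ab] by blast
  have levels: "topspace X - sublocale_points X (b s) = level_below X \<phi> s"
    "topspace X - sublocale_points X (a r) = level_above X \<phi> r" for r s
    by (auto simp: a_points b_points level_below_def level_above_def)
  have "a r = lower_sublocale X \<phi> r" and "b s = upper_sublocale X \<phi> s" for r s
    using Fbar_frame_opens_eq_points(1)[OF ab, of r] Fbar_frame_opens_eq_points(2)[OF ab, of s]
    by (simp_all only: levels lower_sublocale_def upper_sublocale_def)
  then show ?thesis
    using that[of \<phi>] f by (simp add: localic_fun_def fun_eq_iff)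
qed

lemma Fbar_frame_opens_eq_range: "Fbar_frame (\<subseteq>) (opens X) = range (localic_fun X)"
  using localic_fun_mem_Fbar_frame by (blast elim: localic_fun_surj)

lemma is_lub_localic_fun_top_iff:
  "is_lub Fbar_le (Fbar_frame (\<subseteq>) (opens X)) {localic_fun X \<phi>, localic_fun X \<psi>}
      (Fbar_top (\<subseteq>) (opens X)) \<longleftrightarrow> (\<forall>x\<in>topspace X. max (\<phi> x) (\<psi> x) = \<infinity>)"
    (is "?lub \<longleftrightarrow> ?max")
proof -
  have "?lub \<longleftrightarrow>
      (\<forall>\<omega>. (\<forall>x\<in>topspace X. \<phi> x \<le> \<omega> x \<and> \<psi> x \<le> \<omega> x) \<longrightarrow> (\<forall>x\<in>topspace X. \<omega> x = \<infinity>))"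
    (is "_ \<longleftrightarrow> ?bound")
    unfolding is_lub_def Fbar_top_eq Fbar_frame_opens_eq_range by (auto simp: localic_fun_le_iff)
  also have "\<dots> \<longleftrightarrow> ?max"
  proof
    assume ?bound
    from spec[OF this, of "\<lambda>x. max (\<phi> x) (\<psi> x)"]
    show ?max
      by simp
  next
    assume ?max
    then show ?bound
      by (metis max.boundedI ereal_infty_less_eq(1))
  qed
  finally show ?thesis .
qed

lemma is_glb_localic_fun_bot_iff:
  "is_glb Fbar_le (Fbar_frame (\<subseteq>) (opens X)) {localic_fun X \<phi>, localic_fun X \<psi>}
      (Fbar_bot (\<subseteq>) (opens X)) \<longleftrightarrow> (\<forall>x\<in>topspace X. min (\<phi> x) (\<psi> x) = -\<infinity>)"
    (is "?glb \<longleftrightarrow> ?min")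
proof -
  have "?glb \<longleftrightarrow>
      (\<forall>\<omega>. (\<forall>x\<in>topspace X. \<omega> x \<le> \<phi> x \<and> \<omega> x \<le> \<psi> x) \<longrightarrow> (\<forall>x\<in>topspace X. \<omega> x = -\<infinity>))"
    (is "_ \<longleftrightarrow> ?bound")
    unfolding is_glb_def Fbar_bot_eq Fbar_frame_opens_eq_range by (auto simp: localic_fun_le_iff)
  also have "\<dots> \<longleftrightarrow> ?min"
  proof
    assume ?bound
    from spec[OF this, of "\<lambda>x. min (\<phi> x) (\<psi> x)"]
    show ?min
      by simp
  next
    assume ?min
    then show ?bound
      by (metis min.boundedI ereal_infty_less_eq(2))
  qed
  finally show ?thesis .
qed

lemma localic_fun_mem_F_frame_iff:
  "localic_fun X \<phi> \<in> F_frame (\<subseteq>) (opens X) \<longleftrightarrow> (\<forall>x\<in>topspace X. \<phi> x \<noteq> \<infinity> \<and> \<phi> x \<noteq> -\<infinity>)"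
proof -
  have ball_Fbar_frame: "(\<forall>g\<in>Fbar_frame (\<subseteq>) (opens X). P g) \<longleftrightarrow> (\<forall>\<psi>. P (localic_fun X \<psi>))" for P
    by (simp add: Fbar_frame_opens_eq_range)
  have top: "localic_fun X \<psi> = Fbar_top (\<subseteq>) (opens X) \<longleftrightarrow> (\<forall>x\<in>topspace X. \<psi> x = \<infinity>)"
    and bot: "localic_fun X \<psi> = Fbar_bot (\<subseteq>) (opens X) \<longleftrightarrow> (\<forall>x\<in>topspace X. \<psi> x = -\<infinity>)" for \<psi>
    by (simp_all add: Fbar_top_eq Fbar_bot_eq localic_fun_eq_iff)
  have "localic_fun X \<phi> \<in> F_frame (\<subseteq>) (opens X) \<longleftrightarrow>
      (\<forall>\<psi>. ((\<forall>x\<in>topspace X. max (\<phi> x) (\<psi> x) = \<infinity>) \<longrightarrow> (\<forall>x\<in>topspace X. \<psi> x = \<infinity>)) \<and>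
           ((\<forall>x\<in>topspace X. min (\<phi> x) (\<psi> x) = -\<infinity>) \<longrightarrow> (\<forall>x\<in>topspace X. \<psi> x = -\<infinity>)))"
    unfolding F_frame_def
    by (simp add: localic_fun_mem_Fbar_frame ball_Fbar_frame is_lub_localic_fun_top_iff
        is_glb_localic_fun_bot_iff top bot)
  also have "\<dots> \<longleftrightarrow> (\<forall>x\<in>topspace X. \<phi> x \<noteq> \<infinity> \<and> \<phi> x \<noteq> -\<infinity>)"
    by (simp add: all_conj_distrib ball_conj_distrib
        all_max_PInfty_cancel_iff all_min_MInfty_cancel_iff)
  finally show ?thesis .
qed

lemma localic_fun_image_Fbar_space: "localic_fun X ` Fbar_space X = Fbar_frame (\<subseteq>) (opens X)"
proof -
  have "localic_fun X \<phi> \<in> localic_fun X ` Fbar_space X" for \<phi>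
  proof (rule image_eqI)
    show "localic_fun X \<phi> = localic_fun X (restrict \<phi> (topspace X))"
      by (rule localic_fun_cong) simp
  qed (simp add: Fbar_space_def)
  then show ?thesis
    unfolding Fbar_frame_opens_eq_range by blast
qed

lemma localic_fun_image_F_space:
  "(\<lambda>\<phi>. localic_fun X (\<lambda>x. ereal (\<phi> x))) ` F_space X = F_frame (\<subseteq>) (opens X)"
proof
  show "(\<lambda>\<phi>. localic_fun X (\<lambda>x. ereal (\<phi> x))) ` F_space X \<subseteq> F_frame (\<subseteq>) (opens X)"
    by (auto simp: localic_fun_mem_F_frame_iff)
next
  show "F_frame (\<subseteq>) (opens X) \<subseteq> (\<lambda>\<phi>. localic_fun X (\<lambda>x. ereal (\<phi> x))) ` F_space X"
  proof
    fix f assume f: "f \<in> F_frame (\<subseteq>) (opens X)"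
    then obtain \<psi> where \<psi>: "f = localic_fun X \<psi>"
      unfolding F_frame_def Fbar_frame_opens_eq_range by blast
    then have finite: "\<forall>x\<in>topspace X. \<psi> x \<noteq> \<infinity> \<and> \<psi> x \<noteq> -\<infinity>"
      using f localic_fun_mem_F_frame_iff by blast
    define \<phi> where "\<phi> = restrict (\<lambda>x. real_of_ereal (\<psi> x)) (topspace X)"
    have "\<phi> \<in> F_space X"
      by (simp add: F_space_def \<phi>_def)
    moreover have "localic_fun X (\<lambda>x. ereal (\<phi> x)) = f"
      unfolding \<psi> using finite by (intro localic_fun_cong) (auto simp: \<phi>_def ereal_real)
    ultimately show "f \<in> (\<lambda>\<phi>. localic_fun X (\<lambda>x. ereal (\<phi> x))) ` F_space X"
      by blast
  qed
qed

end

lemma order_isomorphicI: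
  assumes "f ` A = B"
    and "\<And>x y. x \<in> A \<Longrightarrow> y \<in> A \<Longrightarrow> leA x y \<longleftrightarrow> leB (f x) (f y)"
    and "\<And>x. x \<in> A \<Longrightarrow> leA x x"
    and "\<And>x y. x \<in> A \<Longrightarrow> y \<in> A \<Longrightarrow> leA x y \<Longrightarrow> leA y x \<Longrightarrow> x = y"
  shows "order_isomorphic A leA B leB"
  unfolding order_isomorphic_def
proof (intro exI conjI)
  have "inj_on f A"
    using assms(2-4) by (metis inj_onI)
  then show "bij_betw f A B"
    using assms(1) by (simp add: bij_betw_def)
qed (use assms(2) in blast)

theorem mainTheorem14:
  fixes X :: "'a topology"
  assumes "t1_space X"
  shows "order_isomorphic (Fbar_space X) (pointwise_le X)
           (Fbar_frame (\<subseteq>) (opens X)) Fbar_le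
       \<and> order_isomorphic (F_space X) (pointwise_le X)
           (F_frame (\<subseteq>) (opens X)) Fbar_le"
proof
  show "order_isomorphic (Fbar_space X) (pointwise_le X) (Fbar_frame (\<subseteq>) (opens X)) Fbar_le"
    by (rule order_isomorphicI[OF localic_fun_image_Fbar_space[OF assms]])
      (auto simp: pointwise_le_def localic_fun_le_iff[OF assms] Fbar_space_def PiE_iff
        intro!: extensionalityI[where A = "topspace X"] intro: order_antisym)
  show "order_isomorphic (F_space X) (pointwise_le X) (F_frame (\<subseteq>) (opens X)) Fbar_le"
    by (rule order_isomorphicI[OF localic_fun_image_F_space[OF assms]])
      (auto simp: pointwise_le_def localic_fun_le_iff[OF assms] F_space_def PiE_iff
        intro!: extensionalityI[where A = "topspace X"] intro: order_antisym)
qed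

end
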